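(* Let $A$ be a real $m\times n$ matrix, $\mathbf b\in\mathbb R^m$, $\mathbf c\in\mathbb R^n$ (row vector), such that the linear program $\max\mathbf c\mathbf x$ s.t. $A\mathbf x\le\mathbf b$, $\mathbf x\ge0$ is bounded with unique optimal primal and dual solutions $\mathbf x^*$, $\mathbf y^*$. Then for every primal feasible $\mathbf x$, \[ \mathbf c(\mathbf x^*-\mathbf x)\ge\alpha_D(A,\mathbf b,\mathbf c)\,\|A_{V,:}(\mathbf x^*-\mathbf x)\|. \]
   Context: The dual is $\min\mathbf y\mathbf b$ s.t. $\mathbf yA\ge\mathbf c$, $\mathbf y\ge0$. $V=\{j:y^*_j>0\}$, $A_{V,:}$ is the submatrix of rows indexed by $V$, and $\alpha_D(A,\mathbf b,\mathbf c)=\min_{j\in V}y^*_j$. $\|\cdot\|$ is the Euclidean norm. *)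

theory Defs
  imports "HOL-Analysis.Analysis"
begin

text \<open>LP  max c x  s.t.  A x \<le> b, x \<ge> 0  with A an m x n real matrix
  (rows indexed by 'm, columns by 'n); dual  min y b  s.t.  y A \<ge> c, y \<ge> 0.\<close>

definition primal_feasible :: "real^'n^'m \<Rightarrow> real^'m \<Rightarrow> real^'n \<Rightarrow> bool" where
  "primal_feasible A b x \<longleftrightarrow> (\<forall>i. (A *v x) $ i \<le> b $ i) \<and> (\<forall>j. 0 \<le> x $ j)"

definition dual_feasible :: "real^'n^'m \<Rightarrow> real^'n \<Rightarrow> real^'m \<Rightarrow> bool" where
  "dual_feasible A c y \<longleftrightarrow> (\<forall>j. c $ j \<le> (y v* A) $ j) \<and> (\<forall>i. 0 \<le> y $ i)"

definition primal_optimal :: "real^'n^'m \<Rightarrow> real^'m \<Rightarrow> real^'n \<Rightarrow> real^'n \<Rightarrow> bool" where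
  "primal_optimal A b c x \<longleftrightarrow> primal_feasible A b x \<and>
     (\<forall>x'. primal_feasible A b x' \<longrightarrow> c \<bullet> x' \<le> c \<bullet> x)"

definition dual_optimal :: "real^'n^'m \<Rightarrow> real^'m \<Rightarrow> real^'n \<Rightarrow> real^'m \<Rightarrow> bool" where
  "dual_optimal A b c y \<longleftrightarrow> dual_feasible A c y \<and>
     (\<forall>y'. dual_feasible A c y' \<longrightarrow> y \<bullet> b \<le> y' \<bullet> b)"

definition dual_support :: "real^'m \<Rightarrow> 'm set" where
  "dual_support y = {j. 0 < y $ j}"

text \<open>alpha_D = min over V of y*_j (only meaningful for V nonempty).\<close>
definition alpha_D :: "real^'m \<Rightarrow> real" where
  "alpha_D y = Min ((\<lambda>j. y $ j) ` dual_support y)"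

definition sub_rows_norm :: "real^'n^'m \<Rightarrow> 'm set \<Rightarrow> real^'n \<Rightarrow> real" where
  "sub_rows_norm A V v = sqrt (\<Sum>i\<in>V. ((A *v v) $ i)\<^sup>2)"

end

theory Submission
  imports Defs
begin

(* Strong LP duality, obtained by separating the point (c, c xs) from the closed convex cone
  generated by the rows (A_i, b_i), the vectors (-e_j, 0) and (0, 1), gives c xs = ys b.
  Complementary slackness then makes the rows in V tight at xs, so A_V (xs - x) >= 0, and
  weak duality for x gives c (xs - x) >= ys A (xs - x) = sum over V of ys_j (A (xs - x))_j.
  Each ys_j is at least alpha_D and the l1 norm of a nonnegative vector dominates its l2 norm. *)

lemma convex_cone_separating_hyperplane:
  fixes p :: "'a::{real_inner,heine_borel}"
  assumes "convex_cone K" "closed K" "p \<notin> K"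
  obtains a where "inner a p < 0" "\<And>k. k \<in> K \<Longrightarrow> 0 \<le> inner a k"
proof -
  obtain a \<beta> where a_p: "inner a p < \<beta>" and a_K: "\<And>k. k \<in> K \<Longrightarrow> \<beta> < inner a k"
    using separating_hyperplane_closed_point assms convex_cone_def by metis
  have "\<beta> < 0"
    using a_K[of 0] assms(1) by (simp add: convex_cone_contains_0)
  have a_K_nonneg: "0 \<le> inner a k" if "k \<in> K" for k
  proof (rule ccontr)
    assume neg: "\<not> 0 \<le> inner a k"
    \<comment> \<open>scaling k onto the hyperplane inner a = \<beta> stays in the cone\<close>
    define r where "r = \<beta> / inner a k"
    have "0 \<le> r"
      using neg \<open>\<beta> < 0\<close> by (simp add: r_def divide_nonpos_neg)
    then have "r *\<^sub>R k \<in> K"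
      using assms(1) that by (simp add: convex_cone_iff)
    moreover have "inner a (r *\<^sub>R k) = \<beta>"
      using neg by (simp add: r_def)
    ultimately show False
      using a_K by fastforce
  qed
  moreover have "inner a p < 0"
    using a_p \<open>\<beta> < 0\<close> by simp
  ultimately show thesis
    using that by blast
qed

lemma vector_matrix_mult_axis: "axis i (1::real) v* A = A $ i"
proof -
  have "(\<Sum>k\<in>UNIV. axis i 1 $ k * A $ k $ j) = A $ i $ j" for j
    by (simp add: axis_def of_bool_def[symmetric])
  then show ?thesis
    by (simp add: vec_eq_iff vector_matrix_mult_def)
qed

lemma dual_feasible_inner_le:
  fixes A :: "real^'n^'m"
  assumes "dual_feasible A c y" "\<And>j. 0 \<le> x $ j"
  shows "c \<bullet> x \<le> y \<bullet> (A *v x)"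
proof -
  have "c \<bullet> x \<le> (y v* A) \<bullet> x"
    using assms unfolding inner_vec_def dual_feasible_def
    by (intro sum_mono) (simp add: mult_right_mono)
  then show ?thesis
    by (simp add: dot_lmul_matrix)
qed

lemma primal_feasible_inner_le:
  fixes A :: "real^'n^'m"
  assumes "\<And>i. 0 \<le> y $ i" "primal_feasible A b x"
  shows "y \<bullet> (A *v x) \<le> y \<bullet> b"
  using assms unfolding inner_vec_def primal_feasible_def
  by (intro sum_mono) (simp add: mult_left_mono)

lemma weak_duality:
  fixes A :: "real^'n^'m"
  assumes x: "primal_feasible A b x" and y: "dual_feasible A c y"
  shows "c \<bullet> x \<le> y \<bullet> b"
proof -
  have "c \<bullet> x \<le> y \<bullet> (A *v x)"
    using x by (intro dual_feasible_inner_le[OF y]) (simp add: primal_feasible_def)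
  also have "\<dots> \<le> y \<bullet> b"
    using y by (intro primal_feasible_inner_le[OF _ x]) (simp add: dual_feasible_def)
  finally show ?thesis .
qed

lemma complementary_slackness:
  fixes A :: "real^'n^'m"
  assumes x: "primal_feasible A b x" and y: "dual_feasible A c y"
    and gap: "c \<bullet> x = y \<bullet> b" and i: "i \<in> dual_support y"
  shows "(A *v x) $ i = b $ i"
proof -
  have y_nonneg: "\<And>k. 0 \<le> y $ k"
    using y by (simp add: dual_feasible_def)
  have "c \<bullet> x \<le> y \<bullet> (A *v x)"
    using x by (intro dual_feasible_inner_le[OF y]) (simp add: primal_feasible_def)
  with gap primal_feasible_inner_le[OF y_nonneg x] have "y \<bullet> (A *v x) = y \<bullet> b"
    by linarith
  then have "(\<Sum>k\<in>UNIV. y $ k * (b $ k - (A *v x) $ k)) = 0"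
    by (simp add: inner_vec_def right_diff_distrib sum_subtractf)
  moreover have "\<forall>k\<in>UNIV. 0 \<le> y $ k * (b $ k - (A *v x) $ k)"
    using x y_nonneg by (simp add: primal_feasible_def)
  ultimately have "y $ i * (b $ i - (A *v x) $ i) = 0"
    by (simp add: sum_nonneg_eq_0_iff)
  with i show ?thesis
    by (simp add: dual_support_def)
qed

text \<open>The pairs (c, p) such that some dual feasible y has objective y b \<le> p.\<close>

definition lp_dual_cone :: "real^'n^'m \<Rightarrow> real^'m \<Rightarrow> ((real^'n) \<times> real) set" where
  "lp_dual_cone A b =
    {(y v* A - s, y \<bullet> b + t) | y s t. (\<forall>i. 0 \<le> y $ i) \<and> (\<forall>j. 0 \<le> s $ j) \<and> 0 \<le> t}"

definition lp_dual_generators :: "real^'n^'m \<Rightarrow> real^'m \<Rightarrow> ((real^'n) \<times> real) set" where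
  "lp_dual_generators A b =
    range (\<lambda>i. (A $ i, b $ i)) \<union> range (\<lambda>j. (- axis j 1, 0)) \<union> {(0, 1)}"

lemma mem_lp_dual_coneD:
  assumes "(c, p) \<in> lp_dual_cone A b"
  shows "\<exists>y. dual_feasible A c y \<and> y \<bullet> b \<le> p"
  using assms unfolding lp_dual_cone_def dual_feasible_def by force

lemma convex_cone_lp_dual_cone: "convex_cone (lp_dual_cone A b)"
  unfolding convex_cone_iff
proof (intro conjI ballI allI impI)
  show "0 \<in> lp_dual_cone A b"
    unfolding lp_dual_cone_def by (auto simp: zero_prod_def intro!: exI[of _ 0])
next
  fix u v assume "u \<in> lp_dual_cone A b" "v \<in> lp_dual_cone A b"
  then obtain y1 s1 t1 y2 s2 t2
    where "u = (y1 v* A - s1, y1 \<bullet> b + t1)" "\<forall>i. 0 \<le> y1 $ i" "\<forall>j. 0 \<le> s1 $ j" "0 \<le> t1"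
      and "v = (y2 v* A - s2, y2 \<bullet> b + t2)" "\<forall>i. 0 \<le> y2 $ i" "\<forall>j. 0 \<le> s2 $ j" "0 \<le> t2"
    unfolding lp_dual_cone_def by blast
  then show "u + v \<in> lp_dual_cone A b"
    unfolding lp_dual_cone_def
    by (auto simp: algebra_simps
        intro!: exI[of _ "y1 + y2"] exI[of _ "s1 + s2"] exI[of _ "t1 + t2"])
next
  fix u and r :: real assume "u \<in> lp_dual_cone A b" "0 \<le> r"
  then obtain y s t where "u = (y v* A - s, y \<bullet> b + t)" "\<forall>i. 0 \<le> y $ i" "\<forall>j. 0 \<le> s $ j" "0 \<le> t"
    unfolding lp_dual_cone_def by blast
  with \<open>0 \<le> r\<close> show "r *\<^sub>R u \<in> lp_dual_cone A b"
    unfolding lp_dual_cone_def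
    by (auto simp: scaleR_vector_matrix_assoc algebra_simps
        intro!: exI[of _ "r *\<^sub>R y"] exI[of _ "r *\<^sub>R s"] exI[of _ "r * t"])
qed

lemma lp_dual_generators_subset_lp_dual_cone: "lp_dual_generators A b \<subseteq> lp_dual_cone A b"
proof -
  have mem: "(y v* A - s, y \<bullet> b + t) \<in> lp_dual_cone A b"
    if "\<forall>i. 0 \<le> y $ i" "\<forall>j. 0 \<le> s $ j" "0 \<le> t" for y s t
    using that unfolding lp_dual_cone_def by blast
  have "(A $ i, b $ i) \<in> lp_dual_cone A b" for i
  proof -
    have "\<forall>k. 0 \<le> axis i (1::real) $ k"
      by (simp add: axis_def)
    then show ?thesis
      using mem[of "axis i 1" 0 0] by (simp add: vector_matrix_mult_axis inner_axis')
  qed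
  moreover have "(- axis j 1, 0) \<in> lp_dual_cone A b" for j
    using mem[of 0 "axis j 1" 0] by (simp add: axis_def)
  moreover have "(0, 1) \<in> lp_dual_cone A b"
    using mem[of 0 0 1] by simp
  ultimately show ?thesis
    unfolding lp_dual_generators_def by blast
qed

lemma convex_cone_hull_lp_dual_generators_subset:
  "convex_cone hull lp_dual_generators A b \<subseteq> lp_dual_cone A b"
  by (intro hull_minimal lp_dual_generators_subset_lp_dual_cone convex_cone_lp_dual_cone)

lemma closed_convex_cone_hull_lp_dual_generators:
  "closed (convex_cone hull lp_dual_generators A b)"
  by (intro closed_convex_cone_hull) (simp add: lp_dual_generators_def)

text \<open>The hypotheses on (z, l) say that it is nonnegative on lp_dual_generators and negative
  at (c, c xs).\<close>

lemma primal_feasible_improving_point: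
  fixes A :: "real^'n^'m"
  assumes xs: "primal_feasible A b xs"
    and rows: "\<And>i. 0 \<le> z \<bullet> A $ i + l * b $ i"
    and z_nonpos: "\<And>j. z $ j \<le> 0"
    and l: "0 \<le> l"
    and improving: "z \<bullet> c + l * (c \<bullet> xs) < 0"
  defines "x' \<equiv> inverse (1 + l) *\<^sub>R (xs - z)"
  shows "primal_feasible A b x'" and "c \<bullet> xs < c \<bullet> x'"
proof -
  have l1: "0 < 1 + l"
    using l by simp
  have "(A *v x') $ i \<le> b $ i" for i
  proof -
    have "(A *v xs) $ i \<le> b $ i"
      using xs by (simp add: primal_feasible_def)
    with rows[of i] have "(A *v xs) $ i - A $ i \<bullet> z \<le> (1 + l) * b $ i"
      by (simp add: inner_commute algebra_simps)
    moreover have "(A *v x') $ i = ((A *v xs) $ i - A $ i \<bullet> z) / (1 + l)"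
      by (simp add: x'_def matrix_vector_mul_component inner_diff_right divide_inverse mult.commute)
    ultimately show ?thesis
      using l1 by (simp add: pos_divide_le_eq mult.commute)
  qed
  moreover have "0 \<le> x' $ j" for j
  proof -
    have "0 \<le> xs $ j"
      using xs by (simp add: primal_feasible_def)
    with z_nonpos[of j] l1 show ?thesis
      by (simp add: x'_def)
  qed
  ultimately show "primal_feasible A b x'"
    by (simp add: primal_feasible_def)
  have "(1 + l) * (c \<bullet> xs) < c \<bullet> xs - c \<bullet> z"
    using improving by (simp add: inner_commute algebra_simps)
  moreover have "c \<bullet> x' = (c \<bullet> xs - c \<bullet> z) / (1 + l)"
    by (simp add: x'_def inner_diff_right divide_inverse mult.commute)
  ultimately show "c \<bullet> xs < c \<bullet> x'"
    using l1 by (simp add: pos_less_divide_eq mult.commute)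
qed

lemma primal_optimal_imp_dual_bound:
  fixes A :: "real^'n^'m"
  assumes xs_opt: "primal_optimal A b c xs"
  shows "\<exists>y. dual_feasible A c y \<and> y \<bullet> b \<le> c \<bullet> xs"
proof (rule ccontr)
  let ?K = "convex_cone hull lp_dual_generators A b"
  assume "\<nexists>y. dual_feasible A c y \<and> y \<bullet> b \<le> c \<bullet> xs"
  then have "(c, c \<bullet> xs) \<notin> ?K"
    using convex_cone_hull_lp_dual_generators_subset mem_lp_dual_coneD by (meson subsetD)
  then obtain a where sep: "inner a (c, c \<bullet> xs) < 0" and nonneg: "\<And>k. k \<in> ?K \<Longrightarrow> 0 \<le> inner a k"
    using convex_cone_separating_hyperplane[OF convex_cone_convex_cone_hull
        closed_convex_cone_hull_lp_dual_generators] by blast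
  obtain z l where a: "a = (z, l)"
    by (cases a)
  have gen: "0 \<le> inner a g" if "g \<in> lp_dual_generators A b" for g
    using that by (intro nonneg hull_inc)
  have rows: "0 \<le> z \<bullet> A $ i + l * b $ i" for i
    using gen[of "(A $ i, b $ i)"] unfolding lp_dual_generators_def by (simp add: a inner_Pair)
  have z_nonpos: "z $ j \<le> 0" for j
    using gen[of "(- axis j 1, 0)"] unfolding lp_dual_generators_def by (simp add: a inner_Pair inner_axis)
  have l: "0 \<le> l"
    using gen[of "(0, 1)"] unfolding lp_dual_generators_def by (simp add: a inner_Pair)
  have improving: "z \<bullet> c + l * (c \<bullet> xs) < 0"
    using sep by (simp add: a inner_Pair)
  have xs: "primal_feasible A b xs"
    using xs_opt by (simp add: primal_optimal_def)
  note better = primal_feasible_improving_point[OF xs rows z_nonpos l improving]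
  show False
    using xs_opt better unfolding primal_optimal_def by (meson leD)
qed

lemma strong_duality:
  fixes A :: "real^'n^'m"
  assumes "primal_optimal A b c xs" "dual_optimal A b c ys"
  shows "ys \<bullet> b = c \<bullet> xs"
proof -
  obtain y where y: "dual_feasible A c y" "y \<bullet> b \<le> c \<bullet> xs"
    using primal_optimal_imp_dual_bound[OF assms(1)] by blast
  have "ys \<bullet> b \<le> y \<bullet> b"
    using assms(2) y(1) by (simp add: dual_optimal_def)
  moreover have "c \<bullet> xs \<le> ys \<bullet> b"
    using assms weak_duality unfolding primal_optimal_def dual_optimal_def by blast
  ultimately show ?thesis
    using y(2) by linarith
qed

lemma inner_eq_sum_dual_support:
  assumes "\<And>i. 0 \<le> y $ i"
  shows "y \<bullet> v = (\<Sum>i\<in>dual_support y. y $ i * v $ i)"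
  unfolding inner_vec_def inner_real_def
  by (rule sum.mono_neutral_right) (use assms in \<open>auto simp: dual_support_def order_le_less\<close>)

lemma alpha_D_le:
  assumes "i \<in> dual_support y"
  shows "alpha_D y \<le> y $ i"
  using assms by (simp add: alpha_D_def)

lemma alpha_D_nonneg:
  assumes "dual_support y \<noteq> {}"
  shows "0 \<le> alpha_D y"
proof -
  have "alpha_D y \<in> (\<lambda>j. y $ j) ` dual_support y"
    unfolding alpha_D_def using assms by (intro Min_in) auto
  then show ?thesis
    by (auto simp: dual_support_def)
qed

lemma alpha_D_mult_sub_rows_norm_le:
  fixes A :: "real^'n^'m"
  assumes y_nonneg: "\<And>i. 0 \<le> y $ i"
    and tight: "\<And>i. i \<in> dual_support y \<Longrightarrow> 0 \<le> (A *v d) $ i"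
  shows "alpha_D y * sub_rows_norm A (dual_support y) d \<le> y \<bullet> (A *v d)"
proof (cases "dual_support y = {}")
  case True
  then show ?thesis
    by (simp add: sub_rows_norm_def inner_eq_sum_dual_support[OF y_nonneg])
next
  case False
  let ?V = "dual_support y" and ?u = "\<lambda>i. (A *v d) $ i"
  have "alpha_D y * sub_rows_norm A ?V d = alpha_D y * L2_set ?u ?V"
    by (simp add: sub_rows_norm_def L2_set_def)
  also have "\<dots> \<le> alpha_D y * sum ?u ?V"
    using False tight by (intro mult_left_mono L2_set_le_sum alpha_D_nonneg) auto
  also have "\<dots> \<le> (\<Sum>i\<in>?V. y $ i * ?u i)"
    unfolding sum_distrib_left by (intro sum_mono mult_right_mono alpha_D_le tight)
  also have "\<dots> = y \<bullet> (A *v d)"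
    by (simp add: inner_eq_sum_dual_support[OF y_nonneg])
  finally show ?thesis .
qed

theorem mainTheorem12:
  fixes A :: "real^'n^'m" and b :: "real^'m" and c :: "real^'n"
    and xs :: "real^'n" and ys :: "real^'m" and x :: "real^'n"
  assumes bounded: "bdd_above ((\<lambda>x'. c \<bullet> x') ` {x'. primal_feasible A b x'})"
    and xs_opt: "primal_optimal A b c xs"
    and xs_unique: "\<And>x'. primal_optimal A b c x' \<Longrightarrow> x' = xs"
    and ys_opt: "dual_optimal A b c ys"
    and ys_unique: "\<And>y'. dual_optimal A b c y' \<Longrightarrow> y' = ys"
    and x_feas: "primal_feasible A b x"
  shows "c \<bullet> (xs - x) \<ge> alpha_D ys * sub_rows_norm A (dual_support ys) (xs - x)"
proof -
  have xs_feas: "primal_feasible A b xs" and ys_feas: "dual_feasible A c ys"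
    using xs_opt ys_opt by (simp_all add: primal_optimal_def dual_optimal_def)
  have ys_nonneg: "\<And>i. 0 \<le> ys $ i"
    using ys_feas by (simp add: dual_feasible_def)
  have gap: "c \<bullet> xs = ys \<bullet> b"
    using strong_duality[OF xs_opt ys_opt] by simp
  have "0 \<le> (A *v (xs - x)) $ i" if "i \<in> dual_support ys" for i
    using complementary_slackness[OF xs_feas ys_feas gap that] x_feas
    by (simp add: primal_feasible_def matrix_vector_mult_diff_distrib)
  then have "alpha_D ys * sub_rows_norm A (dual_support ys) (xs - x) \<le> ys \<bullet> (A *v (xs - x))"
    by (rule alpha_D_mult_sub_rows_norm_le[OF ys_nonneg])
  also have "\<dots> = ys \<bullet> (A *v xs) - ys \<bullet> (A *v x)"
    by (simp add: matrix_vector_mult_diff_distrib inner_diff_right)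
  also have "\<dots> \<le> c \<bullet> (xs - x)"
  proof -
    have "ys \<bullet> (A *v xs) \<le> c \<bullet> xs"
      using primal_feasible_inner_le[OF ys_nonneg xs_feas] gap by simp
    moreover have "c \<bullet> x \<le> ys \<bullet> (A *v x)"
      using dual_feasible_inner_le[OF ys_feas] x_feas by (simp add: primal_feasible_def)
    ultimately show ?thesis
      by (simp add: inner_diff_right)
  qed
  finally show ?thesis .
qed

end
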